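(* Let $\mathfrak A:\mathbb{R}^n\to\mathbb{R}^n$, $\mathfrak B:(\mathbb{R}^n)^*\to\mathbb{R}^n$, $\mathfrak C:\mathbb{R}^n\to(\mathbb{R}^n)^*$ be linear maps with $\mathfrak B,\mathfrak C$ symmetric, such that $\mathfrak B$ is nonsingular and $\mathfrak B^{-1}\mathfrak A:\mathbb{R}^n\to(\mathbb{R}^n)^*$ is symmetric (i.e. $\mathfrak B^{-1}\mathfrak A=\mathfrak A^*\mathfrak B^{-1}$). Let $A=\mathfrak B\big(\mathfrak A^*\mathfrak B^{-1}\mathfrak A+\mathfrak C\big)$, an endomorphism of $\mathbb{R}^n$, and let $g=\mathfrak B^{-1}$, a nondegenerate symmetric bilinear form on $\mathbb{R}^n$. Then, for every $T>0$, the conjugate instants in $\left]0,T\right]$ and the Maslov index of the constant symplectic system \[\begin{pmatrix}v\\ \alpha\end{pmatrix}'=\begin{pmatrix}\mathfrak A&\mathfrak B\\ \mathfrak C&-\mathfrak A^*\end{pmatrix}\begin{pmatrix}v\\ \alpha\end{pmatrix}\] on $[0,T]$ coincide respectively with the conjugate instants in $\left]0,T\right]$ and the Maslov index $\mu(g,A,T)$ of the second-order system $v''=Av$ on $[0,T]$.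
   Context: $\mathfrak B$ symmetric means $\mathfrak B^*=\mathfrak B$ with $(\mathbb{R}^n)^{**}=\mathbb{R}^n$. On $\mathbb{R}^n\oplus(\mathbb{R}^n)^*$ use $\omega((v,\alpha),(w,\beta))=\beta(v)-\alpha(w)$ and $L_0=\{0\}\oplus(\mathbb{R}^n)^*$. For a constant symplectic system with coefficient matrix $Y$ and fundamental solution $\Phi(t)=\exp(tY)$, an instant $t_0\in\left]0,T\right]$ is conjugate if there is a nontrivial solution $(v,\alpha)$ with $v(0)=v(t_0)=0$, and its Maslov index on $[0,T]$ is $\mu_{L_0}(t\mapsto\Phi(t)(L_0))$. Here, for a continuous Lagrangian curve $\ell:[a,b]\to\Lambda$ admitting a Lagrangian $L_1$ transversal to $L_0$ and to all $\ell(t)$, $\mu_{L_0}(\ell)=\mathrm n_+(\varphi(\ell(b)))+\dim(\ell(b)\cap L_0)-\mathrm n_+(\varphi(\ell(a)))-\dim(\ell(a)\cap L_0)$ with $\varphi(L)=\omega(T\cdot,\cdot)$ on $L_0$ and $T:L_0\to L_1$ the map whose graph is $L$, extended to all continuous curves by fixed-endpoint homotopy invariance and additivity under concatenation. For $v''=Av$, conjugate instants $t_1$ are those with a nonzero solution satisfying $v(0)=v(t_1)=0$, and $\mu(g,A,T)$ is the Maslov index of the symplectic system with coefficient matrix $\begin{pmatrix}0&g^{-1}\\ gA&0\end{pmatrix}$ (with $g$ viewed as $v\mapsto g(\cdot,v)$). *)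

theory Defs
  imports "HOL-Analysis.Analysis"
begin

text \<open>Model: \<real>^n is real^'n, its dual (\<real>^n)* is also real^'n with pairing
  alpha(v) = alpha \<bullet> v. Linear maps are matrices; the adjoint of a map is its transpose.\<close>

type_synonym 'n sympl = "(real^'n) \<times> (real^'n)"

definition omega :: "'n::finite sympl \<Rightarrow> 'n sympl \<Rightarrow> real" where
  "omega X Y = snd Y \<bullet> fst X - snd X \<bullet> fst Y"

definition lagrangian :: "'n::finite sympl set \<Rightarrow> bool" where
  "lagrangian L \<longleftrightarrow> subspace L \<and> dim L = CARD('n) \<and> (\<forall>x\<in>L. \<forall>y\<in>L. omega x y = 0)"

definition Lzero :: "'n::finite sympl set" where
  "Lzero = {(0, a) | a. True}"

definition transversal :: "'n::finite sympl set \<Rightarrow> 'n sympl set \<Rightarrow> bool" where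
  "transversal L M \<longleftrightarrow> {x + y | x y. x \<in> L \<and> y \<in> M} = UNIV"

text \<open>T : L0 \<rightarrow> L1 whose graph is L, and the form phi(L) = omega(T \<cdot>, \<cdot>) on L0.\<close>
definition graph_map :: "'n::finite sympl set \<Rightarrow> 'n sympl set \<Rightarrow> 'n sympl \<Rightarrow> 'n sympl" where
  "graph_map L1 L x = (THE z. z \<in> L1 \<and> x + z \<in> L)"

definition phi_form :: "'n::finite sympl set \<Rightarrow> 'n sympl set \<Rightarrow> 'n sympl \<Rightarrow> 'n sympl \<Rightarrow> real" where
  "phi_form L1 L x y = omega (graph_map L1 L x) y"

definition n_plus :: "'a::euclidean_space set \<Rightarrow> ('a \<Rightarrow> 'a \<Rightarrow> real) \<Rightarrow> nat" where
  "n_plus S B = Max {dim W | W. subspace W \<and> W \<subseteq> S \<and> (\<forall>w\<in>W. w \<noteq> 0 \<longrightarrow> B w w > 0)}"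

definition chart_index ::
  "'n::finite sympl set \<Rightarrow> 'n sympl set \<Rightarrow> (real \<Rightarrow> 'n sympl set) \<Rightarrow> real \<Rightarrow> real \<Rightarrow> int" where
  "chart_index L0 L1 l a b =
     int (n_plus L0 (phi_form L1 (l b))) + int (dim (l b \<inter> L0))
     - int (n_plus L0 (phi_form L1 (l a))) - int (dim (l a \<inter> L0))"

definition admissible_partition ::
  "'n::finite sympl set \<Rightarrow> (real \<Rightarrow> 'n sympl set) \<Rightarrow> real \<Rightarrow> real
    \<Rightarrow> nat \<Rightarrow> (nat \<Rightarrow> real) \<Rightarrow> (nat \<Rightarrow> 'n sympl set) \<Rightarrow> bool" where
  "admissible_partition L0 l a b k t L1 \<longleftrightarrow>
     k \<ge> 1 \<and> t 0 = a \<and> t k = b \<and> (\<forall>i<k. t i < t (Suc i)) \<and>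
     (\<forall>i<k. lagrangian (L1 i) \<and> transversal L0 (L1 i) \<and>
        (\<forall>s\<in>{t i..t (Suc i)}. transversal (l s) (L1 i)))"

text \<open>Maslov index mu_{L0} of a continuous Lagrangian curve on [a,b]: the common value
  of the chart sums over admissible partitions (the extension by additivity under
  concatenation / fixed-endpoint homotopy invariance).\<close>
definition maslov_index :: "'n::finite sympl set \<Rightarrow> (real \<Rightarrow> 'n sympl set) \<Rightarrow> real \<Rightarrow> real \<Rightarrow> int" where
  "maslov_index L0 l a b = (THE m. \<forall>k t L1. admissible_partition L0 l a b k t L1 \<longrightarrow>
       m = (\<Sum>i<k. chart_index L0 (L1 i) l (t i) (t (Suc i))))"

definition sysmat :: "real^'n^'n \<Rightarrow> real^'n^'n \<Rightarrow> real^'n^'n \<Rightarrow> real^'n^'n \<Rightarrow> 'n::finite sympl \<Rightarrow> 'n sympl" where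
  "sysmat A B C D X = (A *v fst X + B *v snd X, C *v fst X + D *v snd X)"

definition sys_solution :: "('n::finite sympl \<Rightarrow> 'n sympl) \<Rightarrow> (real \<Rightarrow> 'n sympl) \<Rightarrow> bool" where
  "sys_solution Y X \<longleftrightarrow> (\<forall>t. (X has_vector_derivative Y (X t)) (at t))"

definition sys_conjugate_instants :: "('n::finite sympl \<Rightarrow> 'n sympl) \<Rightarrow> real \<Rightarrow> real set" where
  "sys_conjugate_instants Y T = {t0 \<in> {0<..T}. \<exists>X. sys_solution Y X \<and> (\<exists>t. X t \<noteq> 0) \<and>
      fst (X 0) = 0 \<and> fst (X t0) = 0}"

definition flow_image :: "('n::finite sympl \<Rightarrow> 'n sympl) \<Rightarrow> 'n sympl set \<Rightarrow> real \<Rightarrow> 'n sympl set" where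
  "flow_image Y L t = {X t | X. sys_solution Y X \<and> X 0 \<in> L}"

definition sys_maslov :: "('n::finite sympl \<Rightarrow> 'n sympl) \<Rightarrow> real \<Rightarrow> int" where
  "sys_maslov Y T = maslov_index Lzero (flow_image Y Lzero) 0 T"

definition second_order_solution :: "real^'n^'n \<Rightarrow> (real \<Rightarrow> real^'n::finite) \<Rightarrow> bool" where
  "second_order_solution A v \<longleftrightarrow> (\<exists>v'. \<forall>t. (v has_vector_derivative v' t) (at t) \<and>
      (v' has_vector_derivative (A *v v t)) (at t))"

definition second_order_conjugate_instants :: "real^'n^'n \<Rightarrow> real \<Rightarrow> real set" where
  "second_order_conjugate_instants A T = {t1 \<in> {0<..T}. \<exists>v::real \<Rightarrow> real^'n::finite.
      second_order_solution A v \<and> (\<exists>t. v t \<noteq> 0) \<and> v 0 = 0 \<and> v t1 = 0}"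

text \<open>mu(g, A, T): g given by its matrix G (g(u,w) = u \<bullet> G w, and g viewed as
  v \<mapsto> g(\<cdot>, v) is the matrix G); coefficient matrix [[0, g^{-1}], [g A, 0]].\<close>
definition mu_second_order :: "real^'n^'n \<Rightarrow> real^'n^'n \<Rightarrow> real \<Rightarrow> int" where
  "mu_second_order G A T = sys_maslov (sysmat (0::real^'n::finite^'n) (matrix_inv G) (G ** A) 0) T"

end

(*
  Let M = BB^-1 AA, which is symmetric by the hypotheses. The shear (v, a) |-> (v, a + M v) is a
  linear symplectic isomorphism that fixes L0 pointwise and does not change the v-component.
  Because BB M = AA and M BB = AA^T, it conjugates the given system to the one with coefficient
  matrix [[0, BB], [AA^T BB^-1 AA + CC, 0]] = [[0, g^-1], [g A, 0]], which is the first-order form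
  of v'' = A v. Conjugate instants only involve v-components, so they agree. The Maslov index is
  invariant under a symplectic isomorphism fixing L0: it maps admissible partitions to admissible
  partitions and preserves every chart term, i.e. the form phi and dim (l(t) \<inter> L0). The only
  analytic input is uniqueness for linear ODEs. It bounds dim (Phi(t) L0) by n, which is what
  makes graphs over a transversal Lagrangian L1 unique.
*)
theory Submission
  imports Defs
begin

lemma matrix_inv_right:
  fixes A :: "'a::semiring_1^'n^'m"
  assumes "invertible A"
  shows "A ** matrix_inv A = mat 1"
  using someI_ex[OF assms[unfolded invertible_def]] unfolding matrix_inv_def by blast

lemma matrix_inv_left:
  fixes A :: "'a::semiring_1^'n^'m"
  assumes "invertible A"
  shows "matrix_inv A ** A = mat 1"
  using someI_ex[OF assms[unfolded invertible_def]] unfolding matrix_inv_def by blast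

lemma left_inverse_eq_right_inverse:
  fixes A :: "'a::semiring_1^'n^'m"
  assumes "A ** B = mat 1" "C ** A = mat 1"
  shows "C = B"
  by (metis assms matrix_mul_assoc matrix_mul_lid matrix_mul_rid)

lemma matrix_inv_matrix_inv:
  fixes A :: "'a::semiring_1^'n^'m"
  assumes "invertible A"
  shows "matrix_inv (matrix_inv A) = A"
proof -
  have "invertible (matrix_inv A)"
    using matrix_inv_left[OF assms] matrix_inv_right[OF assms] unfolding invertible_def by blast
  then show ?thesis
    using left_inverse_eq_right_inverse matrix_inv_right assms by metis
qed

lemma symmetric_matrix_inv:
  fixes A :: "'a::comm_semiring_1^'n^'n"
  assumes "invertible A" "transpose A = A"
  shows "transpose (matrix_inv A) = matrix_inv A"
proof -
  have "transpose (matrix_inv A) ** A = mat 1"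
    by (metis assms(2) matrix_inv_right[OF assms(1)] matrix_transpose_mul transpose_mat)
  then show ?thesis
    using left_inverse_eq_right_inverse matrix_inv_right[OF assms(1)] by metis
qed

lemma matrix_vector_mult_uminus: "(- A) *v x = - (A *v (x::'a::ring_1^'n))"
  by (simp add: matrix_vector_mult_def vec_eq_iff sum_negf)

lemma linear_ode_solution_eq_0:
  fixes Y :: "'a::real_inner \<Rightarrow> 'a" and X :: "real \<Rightarrow> 'a"
  assumes "bounded_linear Y" and X': "\<And>s. (X has_vector_derivative Y (X s)) (at s)"
    and "X 0 = 0" "0 \<le> t"
  shows "X t = 0"
proof -
  obtain c where c: "\<And>x. norm (Y x) \<le> norm x * c"
    using bounded_linear.pos_bounded[OF assms(1)] by blast
  define h where "h s = exp (-2 * c * s) * (X s \<bullet> X s)" for s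
  have h': "(h has_real_derivative exp (-2 * c * s) * (2 * (X s \<bullet> Y (X s)) - 2 * c * (X s \<bullet> X s))) (at s)"
    for s
  proof -
    have "((\<lambda>s. X s \<bullet> X s) has_real_derivative 2 * (X s \<bullet> Y (X s))) (at s)"
      unfolding has_field_derivative_def
      using has_derivative_inner[OF X'[unfolded has_vector_derivative_def] X'[unfolded has_vector_derivative_def]]
      by (rule has_derivative_eq_rhs) (auto simp: inner_commute algebra_simps)
    then show ?thesis unfolding h_def
      by (auto intro!: derivative_eq_intros simp: algebra_simps)
  qed
  have "X s \<bullet> Y (X s) \<le> c * (X s \<bullet> X s)" for s
  proof -
    have "X s \<bullet> Y (X s) \<le> norm (X s) * norm (Y (X s))" by (rule norm_cauchy_schwarz)
    also have "\<dots> \<le> norm (X s) * (norm (X s) * c)" using c by (simp add: mult_left_mono)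
    also have "\<dots> = c * (X s \<bullet> X s)" by (simp add: power2_norm_eq_inner[symmetric] power2_eq_square)
    finally show ?thesis .
  qed
  then have "exp (-2 * c * s) * (2 * (X s \<bullet> Y (X s)) - 2 * c * (X s \<bullet> X s)) \<le> 0" for s
    by (simp add: mult_nonneg_nonpos)
  then have "h t \<le> h 0" using DERIV_nonpos_imp_nonincreasing[OF \<open>0 \<le> t\<close>] h' by blast
  then have "X t \<bullet> X t \<le> 0" using \<open>X 0 = 0\<close> by (simp add: h_def mult_le_0_iff)
  then show ?thesis by (metis inner_eq_zero_iff inner_ge_zero order_antisym)
qed

lemma sysmat_bounded_linear: "bounded_linear (sysmat A B C D)"
  unfolding linear_conv_bounded_linear[symmetric]
  by (rule linearI) (auto simp: sysmat_def algebra_simps)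

lemma sys_solution_0: "linear Y \<Longrightarrow> sys_solution Y (\<lambda>_. 0)"
  unfolding sys_solution_def by (simp add: linear_0)

lemma sys_solution_add:
  "linear Y \<Longrightarrow> sys_solution Y X1 \<Longrightarrow> sys_solution Y X2 \<Longrightarrow> sys_solution Y (\<lambda>t. X1 t + X2 t)"
  unfolding sys_solution_def by (auto intro!: has_vector_derivative_add simp: linear_add)

lemma sys_solution_diff:
  "linear Y \<Longrightarrow> sys_solution Y X1 \<Longrightarrow> sys_solution Y X2 \<Longrightarrow> sys_solution Y (\<lambda>t. X1 t - X2 t)"
  unfolding sys_solution_def by (auto intro!: has_vector_derivative_diff simp: linear_diff)

lemma sys_solution_scaleR: "linear Y \<Longrightarrow> sys_solution Y X \<Longrightarrow> sys_solution Y (\<lambda>t. c *\<^sub>R X t)"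
  unfolding sys_solution_def
  by (auto intro!: derivative_eq_intros simp: linear_scale)

lemma sys_solution_linear_image:
  assumes "linear P" "\<And>x. P (Y1 x) = Y2 (P x)" "sys_solution Y1 X"
  shows "sys_solution Y2 (\<lambda>t. P (X t))"
  using assms bounded_linear.has_vector_derivative[of P] linear_conv_bounded_linear
  unfolding sys_solution_def by metis

lemma Lzero_eq_range: "(Lzero :: 'n::finite sympl set) = range (Pair 0)"
  unfolding Lzero_def by auto

lemma linear_Pair_0: "linear (Pair (0::'a::real_vector) :: 'b::real_vector \<Rightarrow> 'a \<times> 'b)"
  by (rule linearI) auto

lemma subspace_Lzero: "subspace (Lzero :: 'n::finite sympl set)"
  unfolding Lzero_eq_range by (rule linear_subspace_image[OF linear_Pair_0 subspace_UNIV])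

lemma dim_Lzero: "dim (Lzero :: 'n::finite sympl set) = CARD('n)"
proof -
  have "dim (Lzero :: 'n sympl set) = dim (UNIV :: (real^'n) set)"
    unfolding Lzero_eq_range by (rule dim_image_eq[OF linear_Pair_0]) (auto simp: inj_on_def)
  then show ?thesis by simp
qed

lemma subspace_flow_graph:
  assumes "linear Y" "subspace L"
  shows "subspace {(X 0, X t) | X. sys_solution Y X \<and> X 0 \<in> L}" (is "subspace ?G")
  unfolding subspace_def
proof (intro conjI ballI allI)
  show "0 \<in> ?G"
    using sys_solution_0[OF assms(1)] subspace_0[OF assms(2)]
    by (intro CollectI exI[where x="\<lambda>_. 0"]) (simp add: zero_prod_def)
next
  fix x y assume "x \<in> ?G" "y \<in> ?G"
  then obtain X1 X2 where "x = (X1 0, X1 t)" "sys_solution Y X1" "X1 0 \<in> L"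
    "y = (X2 0, X2 t)" "sys_solution Y X2" "X2 0 \<in> L" by blast
  then show "x + y \<in> ?G"
    using sys_solution_add[OF assms(1)] subspace_add[OF assms(2)]
    by (intro CollectI exI[where x="\<lambda>s. X1 s + X2 s"]) simp
next
  fix c x assume "x \<in> ?G"
  then obtain X where "x = (X 0, X t)" "sys_solution Y X" "X 0 \<in> L" by blast
  then show "c *\<^sub>R x \<in> ?G"
    using sys_solution_scaleR[OF assms(1)] subspace_scale[OF assms(2)]
    by (intro CollectI exI[where x="\<lambda>s. c *\<^sub>R X s"]) simp
qed

lemma flow_image_eq_snd_image: "flow_image Y L t = snd ` {(X 0, X t) | X. sys_solution Y X \<and> X 0 \<in> L}"
  unfolding flow_image_def by force

lemma subspace_flow_image: "linear Y \<Longrightarrow> subspace L \<Longrightarrow> subspace (flow_image Y L t)"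
  unfolding flow_image_eq_snd_image by (rule linear_subspace_image[OF linear_snd subspace_flow_graph])

lemma dim_flow_image_le:
  assumes "bounded_linear Y" "subspace L" "0 \<le> t"
  shows "dim (flow_image Y L t) \<le> dim L"
proof -
  define G where "G = {(X 0, X t) | X. sys_solution Y X \<and> X 0 \<in> L}"
  have Y: "linear Y" using assms(1) linear_conv_bounded_linear by blast
  have "inj_on fst G"
  proof (rule inj_onI)
    fix x y assume "x \<in> G" "y \<in> G" "fst x = fst y"
    then obtain X1 X2 where "x = (X1 0, X1 t)" "sys_solution Y X1"
      "y = (X2 0, X2 t)" "sys_solution Y X2" "X1 0 = X2 0" unfolding G_def by auto
    moreover have "X1 t - X2 t = 0"
      using linear_ode_solution_eq_0[OF assms(1) _ _ assms(3), of "\<lambda>s. X1 s - X2 s"]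
        sys_solution_diff[OF Y \<open>sys_solution Y X1\<close> \<open>sys_solution Y X2\<close>] \<open>X1 0 = X2 0\<close>
      unfolding sys_solution_def by simp
    ultimately show "x = y" by simp
  qed
  moreover have "subspace G" unfolding G_def by (rule subspace_flow_graph[OF Y assms(2)])
  ultimately have "dim (fst ` G) = dim G"
    by (intro dim_image_eq[OF linear_fst]) (simp add: span_eq_iff[THEN iffD2])
  moreover have "fst ` G \<subseteq> L" unfolding G_def by auto
  ultimately have "dim G \<le> dim L" using dim_subset by metis
  then show ?thesis
    unfolding flow_image_eq_snd_image G_def[symmetric] using dim_image_le[OF linear_snd, of G] by simp
qed

definition symplectic_iso_fixing_Lzero ::
  "('n::finite sympl \<Rightarrow> 'n sympl) \<Rightarrow> ('n sympl \<Rightarrow> 'n sympl) \<Rightarrow> bool" where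
  "symplectic_iso_fixing_Lzero P Q \<longleftrightarrow> linear P \<and> linear Q \<and> (\<forall>x. Q (P x) = x) \<and> (\<forall>x. P (Q x) = x)
     \<and> (\<forall>x y. omega (P x) (P y) = omega x y) \<and> (\<forall>x\<in>Lzero. P x = x)"

lemma symplectic_iso_fixing_Lzero_sym:
  "symplectic_iso_fixing_Lzero P Q \<Longrightarrow> symplectic_iso_fixing_Lzero Q P"
  unfolding symplectic_iso_fixing_Lzero_def by metis

lemma symplectic_iso_fixing_Lzero_image_Lzero:
  "symplectic_iso_fixing_Lzero P Q \<Longrightarrow> P ` Lzero = Lzero"
  unfolding symplectic_iso_fixing_Lzero_def by force

lemma symplectic_iso_fixing_Lzero_linear:
  "symplectic_iso_fixing_Lzero P Q \<Longrightarrow> linear P"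
  unfolding symplectic_iso_fixing_Lzero_def by blast

lemma symplectic_iso_fixing_Lzero_inj:
  "symplectic_iso_fixing_Lzero P Q \<Longrightarrow> inj P"
  unfolding symplectic_iso_fixing_Lzero_def by (metis injI)

lemma symplectic_iso_fixing_Lzero_surj:
  "symplectic_iso_fixing_Lzero P Q \<Longrightarrow> surj P"
  unfolding symplectic_iso_fixing_Lzero_def by (metis surjI)

lemma lagrangian_image:
  assumes P: "symplectic_iso_fixing_Lzero P Q" and L: "lagrangian L"
  shows "lagrangian (P ` L)"
  unfolding lagrangian_def
proof (intro conjI)
  have "linear P" by (rule symplectic_iso_fixing_Lzero_linear[OF P])
  show "subspace (P ` L)"
    using linear_subspace_image[OF \<open>linear P\<close>] L unfolding lagrangian_def by blast
  have "dim (P ` L) = dim L"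
    using inj_on_subset[OF symplectic_iso_fixing_Lzero_inj[OF P] subset_UNIV]
    by (rule dim_image_eq[OF \<open>linear P\<close>])
  then show "dim (P ` L) = CARD('a)" using L unfolding lagrangian_def by simp
  show "\<forall>x\<in>P ` L. \<forall>y\<in>P ` L. omega x y = 0"
    using P L unfolding lagrangian_def symplectic_iso_fixing_Lzero_def by auto
qed

lemma transversal_image:
  assumes "linear P" "surj P" "transversal L M"
  shows "transversal (P ` L) (P ` M)"
  unfolding transversal_def
proof -
  have "z \<in> {x + y |x y. x \<in> P ` L \<and> y \<in> P ` M}" for z
  proof -
    obtain w where "z = P w" using \<open>surj P\<close> by blast
    moreover obtain x y where "w = x + y" "x \<in> L" "y \<in> M"
      using \<open>transversal L M\<close> unfolding transversal_def by blast
    ultimately have "z = P x + P y" by (simp add: linear_add[OF \<open>linear P\<close>])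
    with \<open>x \<in> L\<close> \<open>y \<in> M\<close> show ?thesis by blast
  qed
  then show "{x + y |x y. x \<in> P ` L \<and> y \<in> P ` M} = UNIV" by blast
qed

lemma transversal_Int_subset_0:
  fixes L M :: "'n::finite sympl set"
  assumes "subspace L" "dim L \<le> CARD('n)" "lagrangian M" "transversal L M"
  shows "L \<inter> M \<subseteq> {0}"
proof -
  have "dim {x + y |x y. x \<in> L \<and> y \<in> M} + dim (L \<inter> M) = dim L + dim M"
    using dim_sums_Int[OF assms(1)] assms(3) unfolding lagrangian_def by blast
  moreover have "dim {x + y |x y. x \<in> L \<and> y \<in> M} = 2 * CARD('n)"
    using assms(4) unfolding transversal_def by simp
  ultimately have "dim (L \<inter> M) = 0" using assms(2,3) unfolding lagrangian_def by linarith
  then show ?thesis by simp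
qed

lemma graph_map_ex1:
  fixes L M :: "'n::finite sympl set"
  assumes "subspace L" "dim L \<le> CARD('n)" "lagrangian M" "transversal L M"
  shows "\<exists>!z. z \<in> M \<and> x + z \<in> L"
proof -
  have M: "subspace M" using assms(3) unfolding lagrangian_def by blast
  obtain a b where "x = a + b" "a \<in> L" "b \<in> M"
    using assms(4) unfolding transversal_def by blast
  then have ex: "-b \<in> M \<and> x + -b \<in> L" using subspace_neg[OF M] by simp
  have "z = -b" if "z \<in> M \<and> x + z \<in> L" for z
  proof -
    have "z - -b \<in> M" using subspace_diff[OF M] that ex by blast
    moreover have "(x + z) - (x + -b) \<in> L" using subspace_diff[OF assms(1)] that ex by blast
    ultimately have "z - -b \<in> L \<inter> M" by simp
    then have "z - -b = 0" using transversal_Int_subset_0[OF assms] by blast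
    then show "z = -b" by (simp only: right_minus_eq)
  qed
  with ex show ?thesis by blast
qed

lemma graph_map_image:
  fixes L M :: "'n::finite sympl set"
  assumes P: "symplectic_iso_fixing_Lzero P Q"
    and L: "subspace L" "dim L \<le> CARD('n)" and M: "lagrangian M" "transversal L M"
  shows "graph_map (P ` M) (P ` L) (P x) = P (graph_map M L x)"
proof -
  have "linear P" and "surj P"
    using symplectic_iso_fixing_Lzero_linear[OF P] symplectic_iso_fixing_Lzero_surj[OF P] .
  define g where "g = graph_map M L x"
  have "g \<in> M \<and> x + g \<in> L"
    unfolding g_def graph_map_def by (rule theI'[OF graph_map_ex1[OF L M]])
  moreover have "P x + P g = P (x + g)" by (simp add: linear_add[OF \<open>linear P\<close>])
  ultimately have "P g \<in> P ` M \<and> P x + P g \<in> P ` L" by auto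
  moreover have "\<exists>!z. z \<in> P ` M \<and> P x + z \<in> P ` L"
  proof (rule graph_map_ex1)
    show "subspace (P ` L)" using linear_subspace_image[OF \<open>linear P\<close> L(1)] .
    show "dim (P ` L) \<le> CARD('n)" using dim_image_le[OF \<open>linear P\<close>, of L] L(2) by simp
    show "lagrangian (P ` M)" by (rule lagrangian_image[OF P M(1)])
    show "transversal (P ` L) (P ` M)" by (rule transversal_image[OF \<open>linear P\<close> \<open>surj P\<close> M(2)])
  qed
  ultimately show ?thesis unfolding g_def graph_map_def by (rule the1_equality[rotated])
qed

lemma n_plus_cong:
  assumes "\<And>x y. x \<in> S \<Longrightarrow> y \<in> S \<Longrightarrow> B x y = B' x y"
  shows "n_plus S B = n_plus S B'"
proof -
  have "(\<forall>w\<in>W. w \<noteq> 0 \<longrightarrow> B w w > 0) \<longleftrightarrow> (\<forall>w\<in>W. w \<noteq> 0 \<longrightarrow> B' w w > 0)" if "W \<subseteq> S" for W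
  proof -
    have "\<forall>w\<in>W. B w w = B' w w" using that assms by blast
    then show ?thesis by simp
  qed
  then have "{dim W | W. subspace W \<and> W \<subseteq> S \<and> (\<forall>w\<in>W. w \<noteq> 0 \<longrightarrow> B w w > 0)} =
      {dim W | W. subspace W \<and> W \<subseteq> S \<and> (\<forall>w\<in>W. w \<noteq> 0 \<longrightarrow> B' w w > 0)}"
    by blast
  then show ?thesis unfolding n_plus_def by simp
qed

lemma n_plus_phi_form_image:
  fixes L M :: "'n::finite sympl set"
  assumes P: "symplectic_iso_fixing_Lzero P Q"
    and "subspace L" "dim L \<le> CARD('n)" "lagrangian M" "transversal L M"
  shows "n_plus Lzero (phi_form (P ` M) (P ` L)) = n_plus Lzero (phi_form M L)"
proof (rule n_plus_cong)
  have fix_Lzero: "\<And>x. x \<in> Lzero \<Longrightarrow> P x = x" and symplectic: "\<And>x y. omega (P x) (P y) = omega x y"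
    using P unfolding symplectic_iso_fixing_Lzero_def by auto
  fix x y :: "'n sympl" assume "x \<in> Lzero" "y \<in> Lzero"
  then have "phi_form (P ` M) (P ` L) x y = omega (P (graph_map M L x)) (P y)"
    unfolding phi_form_def using graph_map_image[OF assms, of x] fix_Lzero by simp
  then show "phi_form (P ` M) (P ` L) x y = phi_form M L x y"
    unfolding phi_form_def by (simp add: symplectic)
qed

lemma dim_image_Int_Lzero:
  assumes P: "symplectic_iso_fixing_Lzero P Q"
  shows "dim (P ` L \<inter> Lzero) = dim (L \<inter> Lzero)"
proof -
  have "linear P" by (rule symplectic_iso_fixing_Lzero_linear[OF P])
  have "P ` L \<inter> Lzero = P ` (L \<inter> Lzero)"
    using symplectic_iso_fixing_Lzero_image_Lzero[OF P] image_Int[OF symplectic_iso_fixing_Lzero_inj[OF P]]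
    by simp
  also have "dim \<dots> = dim (L \<inter> Lzero)"
    using inj_on_subset[OF symplectic_iso_fixing_Lzero_inj[OF P] subset_UNIV]
    by (rule dim_image_eq[OF \<open>linear P\<close>])
  finally show ?thesis .
qed

lemma chart_index_image:
  fixes l :: "real \<Rightarrow> 'n::finite sympl set"
  assumes P: "symplectic_iso_fixing_Lzero P Q" and M: "lagrangian M"
    and l: "\<And>s. s \<in> {a, b} \<Longrightarrow> subspace (l s) \<and> dim (l s) \<le> CARD('n) \<and> transversal (l s) M"
  shows "chart_index Lzero (P ` M) (\<lambda>s. P ` l s) a b = chart_index Lzero M l a b"
  using n_plus_phi_form_image[OF P _ _ M] l dim_image_Int_Lzero[OF P] unfolding chart_index_def by simp

lemma admissible_partition_image:
  assumes P: "symplectic_iso_fixing_Lzero P Q" and "admissible_partition Lzero l a b k t L1"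
  shows "admissible_partition Lzero (\<lambda>s. P ` l s) a b k t (\<lambda>i. P ` L1 i)"
proof -
  have "linear P" and "surj P"
    using symplectic_iso_fixing_Lzero_linear[OF P] symplectic_iso_fixing_Lzero_surj[OF P] .
  then have "transversal Lzero (P ` M)" if "transversal Lzero M" for M
    using transversal_image[OF _ _ that] symplectic_iso_fixing_Lzero_image_Lzero[OF P] by metis
  then show ?thesis
    using assms lagrangian_image[OF P] transversal_image[OF \<open>linear P\<close> \<open>surj P\<close>]
    unfolding admissible_partition_def by blast
qed

lemma admissible_partition_ge_start:
  assumes "admissible_partition L0 l a b k t L1" "j \<le> k"
  shows "a \<le> t j"
  using assms(2)
proof (induction j)
  case 0
  then show ?case using assms(1) unfolding admissible_partition_def by simp
next
  case (Suc j)
  then have "t j < t (Suc j)" using assms(1) unfolding admissible_partition_def by simp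
  then show ?case using Suc by simp
qed

lemma chart_sum_image:
  fixes l :: "real \<Rightarrow> 'n::finite sympl set"
  assumes P: "symplectic_iso_fixing_Lzero P Q"
    and l: "\<And>s. a \<le> s \<Longrightarrow> subspace (l s) \<and> dim (l s) \<le> CARD('n)"
    and adm: "admissible_partition Lzero l a b k t L1"
  shows "(\<Sum>i<k. chart_index Lzero (P ` L1 i) (\<lambda>s. P ` l s) (t i) (t (Suc i)))
       = (\<Sum>i<k. chart_index Lzero (L1 i) l (t i) (t (Suc i)))"
proof (rule sum.cong[OF refl], rule chart_index_image[OF P])
  fix i assume "i \<in> {..<k}"
  then show "lagrangian (L1 i)" using adm unfolding admissible_partition_def by simp
  fix s assume "s \<in> {t i, t (Suc i)}"
  moreover have "t i < t (Suc i)" using adm \<open>i \<in> {..<k}\<close> unfolding admissible_partition_def by simp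
  ultimately have "s \<in> {t i..t (Suc i)}" by auto
  then have "transversal (l s) (L1 i)" using adm \<open>i \<in> {..<k}\<close> unfolding admissible_partition_def by simp
  moreover have "a \<le> s"
    using \<open>s \<in> {t i..t (Suc i)}\<close> admissible_partition_ge_start[OF adm, of i] \<open>i \<in> {..<k}\<close> by simp
  ultimately show "subspace (l s) \<and> dim (l s) \<le> CARD('n) \<and> transversal (l s) (L1 i)"
    using l by blast
qed

lemma maslov_index_image:
  fixes l :: "real \<Rightarrow> 'n::finite sympl set"
  assumes P: "symplectic_iso_fixing_Lzero P Q"
    and l: "\<And>s. a \<le> s \<Longrightarrow> subspace (l s) \<and> dim (l s) \<le> CARD('n)"
  shows "maslov_index Lzero (\<lambda>s. P ` l s) a b = maslov_index Lzero l a b"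
proof -
  \<comment> \<open>The predicates under THE coincide, so well-definedness of the index is never needed.\<close>
  let ?sum = "\<lambda>l k t L1. \<Sum>i<k. chart_index Lzero (L1 i) l (t i) (t (Suc i))"
  have Q: "symplectic_iso_fixing_Lzero Q P" by (rule symplectic_iso_fixing_Lzero_sym[OF P])
  have "\<And>x. Q (P x) = x" "\<And>x. P (Q x) = x"
    using P unfolding symplectic_iso_fixing_Lzero_def by blast+
  then have QP: "Q ` P ` S = S" and PQ: "P ` Q ` S = S" for S
    by (simp_all add: image_comp comp_def)
  have "(\<forall>k t L1. admissible_partition Lzero (\<lambda>s. P ` l s) a b k t L1 \<longrightarrow> m = ?sum (\<lambda>s. P ` l s) k t L1)
    \<longleftrightarrow> (\<forall>k t L1. admissible_partition Lzero l a b k t L1 \<longrightarrow> m = ?sum l k t L1)" for m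
  proof (intro iffI allI impI)
    fix k t L1 assume adm: "admissible_partition Lzero l a b k t L1"
      and "\<forall>k t L1. admissible_partition Lzero (\<lambda>s. P ` l s) a b k t L1 \<longrightarrow> m = ?sum (\<lambda>s. P ` l s) k t L1"
    moreover have "admissible_partition Lzero (\<lambda>s. P ` l s) a b k t (\<lambda>i. P ` L1 i)"
      by (rule admissible_partition_image[OF P adm])
    ultimately have "m = ?sum (\<lambda>s. P ` l s) k t (\<lambda>i. P ` L1 i)" by blast
    also have "\<dots> = ?sum l k t L1" by (rule chart_sum_image[OF P l adm])
    finally show "m = ?sum l k t L1" .
  next
    fix k t L1 assume adm: "admissible_partition Lzero (\<lambda>s. P ` l s) a b k t L1"
      and "\<forall>k t L1. admissible_partition Lzero l a b k t L1 \<longrightarrow> m = ?sum l k t L1"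
    moreover have "admissible_partition Lzero l a b k t (\<lambda>i. Q ` L1 i)"
      using admissible_partition_image[OF Q adm] by (simp add: QP)
    ultimately have "m = ?sum l k t (\<lambda>i. Q ` L1 i)" by blast
    also have "\<dots> = ?sum (\<lambda>s. P ` l s) k t L1"
      using chart_sum_image[OF P l \<open>admissible_partition Lzero l a b k t (\<lambda>i. Q ` L1 i)\<close>]
      by (simp add: PQ)
    finally show "m = ?sum (\<lambda>s. P ` l s) k t L1" .
  qed
  then show ?thesis unfolding maslov_index_def by simp
qed

lemma flow_image_intertwined:
  assumes "linear P" "linear Q" "\<And>x. Q (P x) = x" "\<And>x. P (Q x) = x"
    and PY: "\<And>x. P (Y1 x) = Y2 (P x)"
  shows "flow_image Y2 (P ` L) t = P ` flow_image Y1 L t"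
proof
  have QY: "\<And>x. Q (Y2 x) = Y1 (Q x)" by (metis PY assms(3,4))
  show "flow_image Y2 (P ` L) t \<subseteq> P ` flow_image Y1 L t"
  proof
    fix z assume "z \<in> flow_image Y2 (P ` L) t"
    then obtain Z where Z: "z = Z t" "sys_solution Y2 Z" "Z 0 \<in> P ` L" unfolding flow_image_def by blast
    have "sys_solution Y1 (\<lambda>s. Q (Z s))"
      using sys_solution_linear_image[of Q Y2 Y1] \<open>linear Q\<close> QY Z(2) by blast
    moreover have "Q (Z 0) \<in> L" using Z(3) assms(3) by auto
    ultimately have "Q (Z t) \<in> flow_image Y1 L t"
      unfolding flow_image_def by (intro CollectI exI[where x="\<lambda>s. Q (Z s)"]) simp
    then show "z \<in> P ` flow_image Y1 L t" using assms(4) Z(1) by (metis image_eqI)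
  qed
  show "P ` flow_image Y1 L t \<subseteq> flow_image Y2 (P ` L) t"
  proof
    fix z assume "z \<in> P ` flow_image Y1 L t"
    then obtain X where X: "z = P (X t)" "sys_solution Y1 X" "X 0 \<in> L" unfolding flow_image_def by blast
    have "sys_solution Y2 (\<lambda>s. P (X s))"
      using sys_solution_linear_image[of P Y1 Y2] \<open>linear P\<close> PY X(2) by blast
    with X show "z \<in> flow_image Y2 (P ` L) t"
      unfolding flow_image_def by (intro CollectI exI[where x="\<lambda>s. P (X s)"]) simp
  qed
qed

lemma sys_conjugate_instants_intertwined:
  fixes P Q Y1 Y2 :: "'n::finite sympl \<Rightarrow> 'n sympl"
  assumes "linear P" "linear Q" "\<And>x. Q (P x) = x" "\<And>x. P (Q x) = x"
    and "\<And>x. fst (P x) = fst x" and "\<And>x. P (Y1 x) = Y2 (P x)"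
  shows "sys_conjugate_instants Y2 T = sys_conjugate_instants Y1 T"
proof -
  have subset: "sys_conjugate_instants Y T \<subseteq> sys_conjugate_instants Y' T"
    if "linear R" "inj R" "\<And>x. fst (R x) = fst x" "\<And>x. R (Y x) = Y' (R x)"
    for R Y Y' :: "'n sympl \<Rightarrow> 'n sympl"
  proof
    fix t0 assume "t0 \<in> sys_conjugate_instants Y T"
    then obtain X t where X: "t0 \<in> {0<..T}" "sys_solution Y X" "X t \<noteq> 0" "fst (X 0) = 0" "fst (X t0) = 0"
      unfolding sys_conjugate_instants_def by blast
    have "sys_solution Y' (\<lambda>s. R (X s))"
      using sys_solution_linear_image[of R Y Y'] that(1,4) X(2) by blast
    moreover have "R (X t) \<noteq> 0" using X(3) that(1,2) by (metis linear_0 injD)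
    ultimately show "t0 \<in> sys_conjugate_instants Y' T"
      unfolding sys_conjugate_instants_def using X that(3)
      by (intro CollectI conjI exI[where x="\<lambda>s. R (X s)"]) auto
  qed
  have "inj P" "inj Q" using assms(3,4) by (metis injI)+
  have "fst (Q x) = fst x" for x by (metis assms(4,5))
  moreover have "Q (Y2 x) = Y1 (Q x)" for x by (metis assms(3,4,6))
  ultimately have "sys_conjugate_instants Y2 T \<subseteq> sys_conjugate_instants Y1 T"
    by (rule subset[of Q Y2 Y1, OF \<open>linear Q\<close> \<open>inj Q\<close>])
  moreover have "sys_conjugate_instants Y1 T \<subseteq> sys_conjugate_instants Y2 T"
    by (rule subset[of P Y1 Y2, OF \<open>linear P\<close> \<open>inj P\<close> assms(5,6)])
  ultimately show ?thesis by (rule subset_antisym)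
qed

lemma sys_maslov_intertwined:
  fixes Y1 Y2 :: "'n::finite sympl \<Rightarrow> 'n sympl"
  assumes P: "symplectic_iso_fixing_Lzero P Q" and "bounded_linear Y1"
    and PY: "\<And>x. P (Y1 x) = Y2 (P x)"
  shows "sys_maslov Y2 T = sys_maslov Y1 T"
proof -
  have "flow_image Y2 Lzero = (\<lambda>s. P ` flow_image Y1 Lzero s)"
    using flow_image_intertwined[of P Q Y1 Y2 Lzero] P PY symplectic_iso_fixing_Lzero_image_Lzero[OF P]
    unfolding symplectic_iso_fixing_Lzero_def by auto
  moreover have "subspace (flow_image Y1 Lzero s) \<and> dim (flow_image Y1 Lzero s) \<le> CARD('n)"
    if "0 \<le> s" for s
    using subspace_flow_image[OF _ subspace_Lzero] linear_conv_bounded_linear \<open>bounded_linear Y1\<close>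
      dim_flow_image_le[OF \<open>bounded_linear Y1\<close> subspace_Lzero that] dim_Lzero[where 'n='n]
    by auto
  ultimately show ?thesis unfolding sys_maslov_def by (simp add: maslov_index_image[OF P])
qed

definition shear :: "real^'n^'n \<Rightarrow> 'n::finite sympl \<Rightarrow> 'n sympl" where
  "shear M X = (fst X, snd X + M *v fst X)"

lemma fst_shear [simp]: "fst (shear M X) = fst X"
  by (simp add: shear_def)

lemma linear_shear: "linear (shear M)"
  by (rule linearI) (auto simp: shear_def algebra_simps)

lemma shear_uminus_shear: "shear (- M) (shear M X) = X"
  by (simp add: shear_def matrix_vector_mult_uminus)

lemma symplectic_iso_fixing_Lzero_shear:
  fixes M :: "real^'n::finite^'n"
  assumes "transpose M = M"
  shows "symplectic_iso_fixing_Lzero (shear M) (shear (- M))"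
  unfolding symplectic_iso_fixing_Lzero_def
proof (intro conjI allI ballI)
  fix X Y :: "'n sympl"
  show "shear M (shear (- M) X) = X" using shear_uminus_shear[of "- M"] by simp
  have "(M *v fst Y) \<bullet> fst X = (M *v fst X) \<bullet> fst Y"
    by (metis assms dot_lmul_matrix inner_commute vector_transpose_matrix)
  then show "omega (shear M X) (shear M Y) = omega X Y"
    unfolding omega_def shear_def by (simp add: inner_add_left)
qed (auto simp: linear_shear shear_uminus_shear Lzero_def shear_def matrix_vector_mult_uminus)

lemma shear_sysmat:
  assumes "B ** M = A" "M ** B = transpose A"
  shows "shear M (sysmat A B C (- transpose A) X) = sysmat 0 B (C + M ** A) 0 (shear M X)"
proof -
  have "A *v fst X + B *v snd X = B *v (snd X + M *v fst X)"
    by (simp add: matrix_vector_right_distrib matrix_vector_mul_assoc assms(1))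
  moreover have "C *v fst X - transpose A *v snd X + M *v (A *v fst X + B *v snd X)
      = (C + M ** A) *v fst X"
    by (simp add: matrix_vector_right_distrib matrix_vector_mul_assoc assms(2)
        matrix_vector_mult_add_rdistrib)
  ultimately show ?thesis
    unfolding shear_def sysmat_def by (simp add: matrix_vector_mult_uminus)
qed

lemma sys_conjugate_instants_subset_second_order:
  fixes A B :: "real^'n::finite^'n"
  assumes "invertible B"
  shows "sys_conjugate_instants (sysmat 0 B (matrix_inv B ** A) 0) T \<subseteq> second_order_conjugate_instants A T"
proof
  fix t0 assume "t0 \<in> sys_conjugate_instants (sysmat 0 B (matrix_inv B ** A) 0) T"
  then obtain Z t where Z: "t0 \<in> {0<..T}" "sys_solution (sysmat 0 B (matrix_inv B ** A) 0) Z"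
    "Z t \<noteq> 0" "fst (Z 0) = 0" "fst (Z t0) = 0"
    unfolding sys_conjugate_instants_def by blast
  have Z': "(Z has_vector_derivative (B *v snd (Z s), (matrix_inv B ** A) *v fst (Z s))) (at s)" for s
    using Z(2) unfolding sys_solution_def sysmat_def by simp
  have v': "((\<lambda>s. fst (Z s)) has_vector_derivative B *v snd (Z s)) (at s)" for s
    using bounded_linear.has_vector_derivative[OF bounded_linear_fst Z'] by simp
  have "((\<lambda>s. B *v snd (Z s)) has_vector_derivative B *v ((matrix_inv B ** A) *v fst (Z s))) (at s)" for s
    using bounded_linear.has_vector_derivative[OF bounded_linear_compose[OF
        matrix_vector_mul_bounded_linear bounded_linear_snd] Z'] by simp
  then have v'': "((\<lambda>s. B *v snd (Z s)) has_vector_derivative A *v fst (Z s)) (at s)" for s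
    by (simp add: matrix_vector_mul_assoc matrix_mul_assoc matrix_inv_right[OF assms])
  have "\<exists>s. fst (Z s) \<noteq> 0"
  proof (rule ccontr)
    assume "\<not> (\<exists>s. fst (Z s) \<noteq> 0)"
    then have "(\<lambda>s. fst (Z s)) = (\<lambda>s. 0)" by auto
    then have "((\<lambda>s. fst (Z s)) has_vector_derivative 0) (at t)" by simp
    then have "B *v snd (Z t) = 0" by (rule vector_derivative_unique_at[OF v'])
    then have "snd (Z t) = 0"
      using inj_matrix_vector_mult[OF assms] by (metis injD matrix_vector_mult_0_right)
    then show False using Z(3) \<open>\<not> (\<exists>s. fst (Z s) \<noteq> 0)\<close> by (simp add: prod_eq_iff)
  qed
  moreover have "second_order_solution A (\<lambda>s. fst (Z s))"
    unfolding second_order_solution_def using v' v''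
    by (intro exI[where x="\<lambda>s. B *v snd (Z s)"]) simp
  ultimately show "t0 \<in> second_order_conjugate_instants A T"
    unfolding second_order_conjugate_instants_def using Z(1,4,5) by blast
qed

lemma second_order_conjugate_instants_subset_sys:
  fixes A B :: "real^'n::finite^'n"
  assumes "invertible B"
  shows "second_order_conjugate_instants A T \<subseteq> sys_conjugate_instants (sysmat 0 B (matrix_inv B ** A) 0) T"
proof
  fix t0 assume "t0 \<in> second_order_conjugate_instants A T"
  then obtain v t where v: "t0 \<in> {0<..T}" "second_order_solution A v" "v t \<noteq> 0" "v 0 = 0" "v t0 = 0"
    unfolding second_order_conjugate_instants_def by blast
  then obtain v' where v': "\<And>s. (v has_vector_derivative v' s) (at s)"
    and v'': "\<And>s. (v' has_vector_derivative A *v v s) (at s)"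
    unfolding second_order_solution_def by blast
  have "((\<lambda>s. (v s, matrix_inv B *v v' s)) has_vector_derivative
      (v' s, matrix_inv B *v (A *v v s))) (at s)" for s
    using has_vector_derivative_Pair[OF v' bounded_linear.has_vector_derivative[OF
        matrix_vector_mul_bounded_linear v'']] .
  then have "sys_solution (sysmat 0 B (matrix_inv B ** A) 0) (\<lambda>s. (v s, matrix_inv B *v v' s))"
    unfolding sys_solution_def sysmat_def
    by (simp add: matrix_vector_mul_assoc matrix_inv_right[OF assms])
  moreover have "(v t, matrix_inv B *v v' t) \<noteq> 0" using v(3) by (simp add: zero_prod_def)
  ultimately show "t0 \<in> sys_conjugate_instants (sysmat 0 B (matrix_inv B ** A) 0) T"
    unfolding sys_conjugate_instants_def using v(1,4,5)
    by (intro CollectI conjI exI[where x="\<lambda>s. (v s, matrix_inv B *v v' s)"]) auto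
qed

lemma sys_conjugate_instants_second_order:
  fixes A B :: "real^'n::finite^'n"
  assumes "invertible B"
  shows "sys_conjugate_instants (sysmat 0 B (matrix_inv B ** A) 0) T = second_order_conjugate_instants A T"
  using sys_conjugate_instants_subset_second_order[OF assms]
    second_order_conjugate_instants_subset_sys[OF assms] by (rule subset_antisym)

lemma shear_sysmat_second_order:
  fixes AA BB CC :: "real^'n::finite^'n"
  assumes "invertible BB" "matrix_inv BB ** AA = transpose AA ** matrix_inv BB"
  defines "A \<equiv> BB ** (transpose AA ** matrix_inv BB ** AA + CC)"
  shows "shear (matrix_inv BB ** AA) (sysmat AA BB CC (- transpose AA) X)
    = sysmat 0 BB (matrix_inv BB ** A) 0 (shear (matrix_inv BB ** AA) X)"
proof (rule shear_sysmat[THEN trans])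
  show "BB ** (matrix_inv BB ** AA) = AA"
    by (simp add: matrix_mul_assoc matrix_inv_right[OF assms(1)])
  show "matrix_inv BB ** AA ** BB = transpose AA"
    by (simp add: assms(2) matrix_mul_assoc[symmetric] matrix_inv_left[OF assms(1)])
  show "sysmat 0 BB (CC + matrix_inv BB ** AA ** AA) 0 (shear (matrix_inv BB ** AA) X)
    = sysmat 0 BB (matrix_inv BB ** A) 0 (shear (matrix_inv BB ** AA) X)"
    by (simp add: A_def assms(2) matrix_mul_assoc matrix_inv_left[OF assms(1)] add.commute)
qed

theorem corollary5p8:
  fixes AA BB CC :: "real^'n::finite^'n"
  assumes "transpose BB = BB" and "transpose CC = CC"
    and "invertible BB"
    and "matrix_inv BB ** AA = transpose AA ** matrix_inv BB"
  shows "\<forall>T>0.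
      sys_conjugate_instants (sysmat AA BB CC (- transpose AA)) T
        = second_order_conjugate_instants (BB ** (transpose AA ** matrix_inv BB ** AA + CC)) T
    \<and> sys_maslov (sysmat AA BB CC (- transpose AA)) T
        = mu_second_order (matrix_inv BB) (BB ** (transpose AA ** matrix_inv BB ** AA + CC)) T"
proof (intro allI impI)
  fix T :: real
  define A where "A = BB ** (transpose AA ** matrix_inv BB ** AA + CC)"
  define M where "M = matrix_inv BB ** AA"
  let ?Y = "sysmat AA BB CC (- transpose AA)" and ?Y' = "sysmat 0 BB (matrix_inv BB ** A) 0"
  have intertwined: "shear M (?Y X) = ?Y' (shear M X)" for X
    unfolding M_def A_def by (rule shear_sysmat_second_order[OF assms(3,4)])
  have "transpose M = M"
    by (simp add: M_def matrix_transpose_mul symmetric_matrix_inv assms(1,3,4))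
  have "sys_conjugate_instants ?Y T = sys_conjugate_instants ?Y' T"
    using sys_conjugate_instants_intertwined[of "shear M" "shear (- M)" ?Y ?Y', OF linear_shear
        linear_shear shear_uminus_shear shear_uminus_shear[of "- M", simplified] fst_shear intertwined]
    by simp
  also have "\<dots> = second_order_conjugate_instants A T"
    by (rule sys_conjugate_instants_second_order[OF assms(3)])
  moreover have "sys_maslov ?Y T = mu_second_order (matrix_inv BB) A T"
    using sys_maslov_intertwined[where P="shear M" and ?Y1.0="?Y" and ?Y2.0="?Y'",
        OF symplectic_iso_fixing_Lzero_shear[OF \<open>transpose M = M\<close>]
        sysmat_bounded_linear intertwined]
    by (simp add: mu_second_order_def matrix_inv_matrix_inv[OF assms(3)])
  ultimately show "sys_conjugate_instants ?Y T = second_order_conjugate_instants A T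
    \<and> sys_maslov ?Y T = mu_second_order (matrix_inv BB) A T" by simp
qed

end
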